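(* Let $(V,\nu)$ be a strongly complete PN-space, $(W,\mu)$ a PN-space, and $(T_n)_{n\in\mathbb{N}}$ a sequence in $B(V,W)$ such that $\sup_{n\in\mathbb{N}}\|T_nx\|_{w'}<\infty$ for every $x\in V$ and every $w'\in(0,1)$. Then for every $w'\in(0,1)$ there exists $w\in(0,1)$ such that $\sup_{n\in\mathbb{N}}\|T_n\|_{(w,w')}<\infty$.
   Context: A distance distribution function is a map $F:[-\infty,+\infty]\to[0,1]$ that is nondecreasing, left-continuous on $\mathbb{R}$, with $F(-\infty)=0$, $F(+\infty)=1$ and $F(0)=0$; the set of these is $\Delta^+$. $\mathcal{D}^+\subseteq\Delta^+$ denotes the proper ones, i.e. those with $\lim_{x\to+\infty}F(x)=1$. $H_0\in\Delta^+$ is $H_0(x)=0$ for $x\le 0$ and $H_0(x)=1$ for $x>0$. For $F,G\in\Delta^+$ let $\tau_M(F,G)(x)=\sup\{\min(F(s),G(t)) : s+t=x\}$. In this paper a PN-space $(V,\nu)$ is a real vector space $V$ with a map $\nu:V\to\Delta^+$, $p\mapsto\nu_p$, such that for all $p,q\in V$: $\nu_p=H_0$ iff $p=0$; $\nu_{p+q}\ge\tau_M(\nu_p,\nu_q)$ pointwise; and $\nu_{\alpha p}(x)=\nu_p(x/|\alpha|)$ for all real $\alpha\neq0$ and $x\ge 0$. Standing assumption: $\nu_p\in\mathcal{D}^+$ for every $p\in V$. For $x\in V$ and $w\in(0,1)$ put $\|x\|_w=\sup\{t\in\mathbb{R}:\nu_x(t)<w\}$ (in $W$ analogously using $\mu$);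 for each $w$ this is a norm, and $w\mapsto\|x\|_w$ is nondecreasing. The strong topology on $V$ is generated by the neighbourhoods $N_p(t)=\{q\in V:\nu_{p-q}(t)>1-t\}$, $p\in V$, $t>0$; equivalently the balls $\{x:\|x-p\|_w<r\}$ form a basis for it. A sequence $(p_n)$ converges strongly to $p$ if for every $t>0$ one has $p_n\in N_p(t)$ for all large $n$; it is strongly Cauchy if for every $t>0$ there is $N$ with $\nu_{p_n-p_m}(t)>1-t$ for all $m,n>N$. $(V,\nu)$ is strongly complete if every strongly Cauchy sequence converges strongly. $B(V,W)$ denotes the set of linear operators $V\to W$ that are continuous for the strong topologies. For a linear $T:V\to W$ and $w,w'\in(0,1)$, $\|T\|_{(w,w')}=\sup\{\|Tx\|_{w'}: x\in V,\ \|x\|_w\le 1\}\in[0,+\infty]$. *)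

theory Defs
  imports "HOL-Analysis.Analysis"
begin

text \<open>Distance distribution functions are represented by their restriction to the reals;
  the values at -infinity (0) and +infinity (1) are fixed by definition.\<close>

definition ddf :: "(real \<Rightarrow> real) \<Rightarrow> bool" where
  "ddf F \<longleftrightarrow> mono F \<and> (\<forall>x. 0 \<le> F x \<and> F x \<le> 1) \<and>
     (\<forall>x. (F \<longlongrightarrow> F x) (at_left x)) \<and> F 0 = 0"

definition proper_ddf :: "(real \<Rightarrow> real) \<Rightarrow> bool" where
  "proper_ddf F \<longleftrightarrow> ddf F \<and> (F \<longlongrightarrow> 1) at_top"

definition H0 :: "real \<Rightarrow> real" where
  "H0 x = (if x \<le> 0 then 0 else 1)"

definition tauM :: "(real \<Rightarrow> real) \<Rightarrow> (real \<Rightarrow> real) \<Rightarrow> real \<Rightarrow> real" where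
  "tauM F G x = Sup {min (F s) (G t) | s t. s + t = x}"

definition pn_space :: "('a::real_vector \<Rightarrow> real \<Rightarrow> real) \<Rightarrow> bool" where
  "pn_space \<nu> \<longleftrightarrow>
     (\<forall>p. proper_ddf (\<nu> p)) \<and>
     (\<forall>p. \<nu> p = H0 \<longleftrightarrow> p = 0) \<and>
     (\<forall>p q x. \<nu> (p + q) x \<ge> tauM (\<nu> p) (\<nu> q) x) \<and>
     (\<forall>p \<alpha> x. \<alpha> \<noteq> 0 \<longrightarrow> x \<ge> 0 \<longrightarrow> \<nu> (\<alpha> *\<^sub>R p) x = \<nu> p (x / \<bar>\<alpha>\<bar>))"

definition pn_norm :: "('a \<Rightarrow> real \<Rightarrow> real) \<Rightarrow> real \<Rightarrow> 'a \<Rightarrow> real" where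
  "pn_norm \<nu> w x = Sup {t. \<nu> x t < w}"

definition strong_nbhd :: "('a::real_vector \<Rightarrow> real \<Rightarrow> real) \<Rightarrow> 'a \<Rightarrow> real \<Rightarrow> 'a set" where
  "strong_nbhd \<nu> p t = {q. \<nu> (p - q) t > 1 - t}"

definition strong_open :: "('a::real_vector \<Rightarrow> real \<Rightarrow> real) \<Rightarrow> 'a set \<Rightarrow> bool" where
  "strong_open \<nu> U \<longleftrightarrow> (\<forall>p\<in>U. \<exists>t>0. strong_nbhd \<nu> p t \<subseteq> U)"

definition strong_conv :: "('a::real_vector \<Rightarrow> real \<Rightarrow> real) \<Rightarrow> (nat \<Rightarrow> 'a) \<Rightarrow> 'a \<Rightarrow> bool" where
  "strong_conv \<nu> s p \<longleftrightarrow> (\<forall>t>0. \<exists>N. \<forall>n\<ge>N. s n \<in> strong_nbhd \<nu> p t)"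

definition strong_cauchy :: "('a::real_vector \<Rightarrow> real \<Rightarrow> real) \<Rightarrow> (nat \<Rightarrow> 'a) \<Rightarrow> bool" where
  "strong_cauchy \<nu> s \<longleftrightarrow> (\<forall>t>0. \<exists>N. \<forall>m>N. \<forall>n>N. \<nu> (s n - s m) t > 1 - t)"

definition strongly_complete :: "('a::real_vector \<Rightarrow> real \<Rightarrow> real) \<Rightarrow> bool" where
  "strongly_complete \<nu> \<longleftrightarrow> (\<forall>s. strong_cauchy \<nu> s \<longrightarrow> (\<exists>p. strong_conv \<nu> s p))"

definition bounded_ops ::
  "('a::real_vector \<Rightarrow> real \<Rightarrow> real) \<Rightarrow> ('b::real_vector \<Rightarrow> real \<Rightarrow> real) \<Rightarrow> ('a \<Rightarrow> 'b) set" where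
  "bounded_ops \<nu> \<mu> = {T. linear T \<and> (\<forall>U. strong_open \<mu> U \<longrightarrow> strong_open \<nu> (T -` U))}"

definition op_norm ::
  "('a::real_vector \<Rightarrow> real \<Rightarrow> real) \<Rightarrow> ('b::real_vector \<Rightarrow> real \<Rightarrow> real) \<Rightarrow> real \<Rightarrow> real \<Rightarrow> ('a \<Rightarrow> 'b) \<Rightarrow> ereal" where
  "op_norm \<nu> \<mu> w w' T = (SUP x\<in>{x. pn_norm \<nu> w x \<le> 1}. ereal (pn_norm \<mu> w' (T x)))"

end

theory Submission
  imports Defs
begin

text \<open>The strong topology of a PN-space is induced by the metric
  \<open>d(x, y) = inf {t > 0. \<nu>\<^sub>x\<^sub>-\<^sub>y(t) > 1 - t}\<close>, which is complete when the space is strongly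
  complete, and each \<open>\<parallel>\<cdot>\<parallel>\<^sub>w\<close> is continuous for it. Hence the sets
  \<open>F\<^sub>k = {x. \<forall>n. \<parallel>T\<^sub>n x\<parallel>\<^sub>w\<^sub>' \<le> k}\<close> are closed, and by pointwise boundedness they cover \<open>V\<close>.
  By Baire's theorem some \<open>F\<^sub>k\<close> contains a \<open>d\<close>-ball \<open>B(p, r)\<close>. For \<open>0 < s < min r 1\<close> and
  \<open>w = 1 - s/2\<close>, every \<open>y\<close> with \<open>\<parallel>y\<parallel>\<^sub>w < s\<close> satisfies \<open>d(p, p + y) \<le> s\<close>, so
  \<open>\<parallel>T\<^sub>n y\<parallel>\<^sub>w\<^sub>' \<le> 2k\<close>; scaling gives \<open>\<parallel>T\<^sub>n\<parallel>\<^sub>(\<^sub>w\<^sub>,\<^sub>w\<^sub>'\<^sub>) \<le> 4k/s\<close> for all \<open>n\<close>.\<close>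

definition strong_dist :: "('a::real_vector \<Rightarrow> real \<Rightarrow> real) \<Rightarrow> 'a \<Rightarrow> 'a \<Rightarrow> real" where
  "strong_dist \<nu> x y = Inf {t. 0 < t \<and> 1 - t < \<nu> (x - y) t}"

abbreviation strong_mtopology :: "('a::real_vector \<Rightarrow> real \<Rightarrow> real) \<Rightarrow> 'a topology" where
  "strong_mtopology \<nu> \<equiv> Metric_space.mtopology UNIV (strong_dist \<nu>)"

context
  fixes \<nu> :: "'a::real_vector \<Rightarrow> real \<Rightarrow> real"
  assumes pn: "pn_space \<nu>"
begin

lemma pn_proper_ddf: "proper_ddf (\<nu> p)"
  using pn unfolding pn_space_def by blast

lemma pn_mono: "s \<le> t \<Longrightarrow> \<nu> p s \<le> \<nu> p t"
  using pn_proper_ddf unfolding proper_ddf_def ddf_def by (auto dest: monoD)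

lemma pn_nonneg: "0 \<le> \<nu> p t"
  and pn_le_1: "\<nu> p t \<le> 1"
  using pn_proper_ddf unfolding proper_ddf_def ddf_def by auto

lemma pn_nonpos_eq_0: "t \<le> 0 \<Longrightarrow> \<nu> p t = 0"
  using pn_proper_ddf pn_mono[of t 0 p] pn_nonneg[of p t]
  unfolding proper_ddf_def ddf_def by auto

lemma pn_tendsto_1: "(\<nu> p \<longlongrightarrow> 1) at_top"
  using pn_proper_ddf unfolding proper_ddf_def by blast

lemma pn_eq_H0_iff: "\<nu> p = H0 \<longleftrightarrow> p = 0"
  using pn unfolding pn_space_def by blast

lemma pn_min_le_add: "min (\<nu> p s) (\<nu> q t) \<le> \<nu> (p + q) (s + t)"
proof -
  have "min (\<nu> p s) (\<nu> q t) \<le> tauM (\<nu> p) (\<nu> q) (s + t)"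
    unfolding tauM_def
  proof (rule cSup_upper)
    show "bdd_above {min (\<nu> p s') (\<nu> q t') |s' t'. s' + t' = s + t}"
      by (rule bdd_aboveI[of _ 1]) (auto simp: min_le_iff_disj pn_le_1)
  qed blast
  also have "\<dots> \<le> \<nu> (p + q) (s + t)"
    using pn unfolding pn_space_def by blast
  finally show ?thesis .
qed

lemma pn_scaleR: "c \<noteq> 0 \<Longrightarrow> \<nu> (c *\<^sub>R p) t = \<nu> p (t / \<bar>c\<bar>)"
proof (cases "t \<ge> 0")
  case True
  assume "c \<noteq> 0"
  with True pn show ?thesis unfolding pn_space_def by blast
next
  case False
  then show ?thesis by (simp add: pn_nonpos_eq_0 divide_nonpos_pos)
qed

lemma pn_minus: "\<nu> (- p) = \<nu> p"
  using pn_scaleR[of "-1" p] by auto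

subsection \<open>The strong metric\<close>

lemma strong_dist_set_nonempty: "\<exists>t. 0 < t \<and> 1 - t < \<nu> p t"
  using pn_nonneg[of p 2] by (intro exI[of _ 2]) auto

lemma strong_dist_le: "0 < t \<Longrightarrow> 1 - t < \<nu> (x - y) t \<Longrightarrow> strong_dist \<nu> x y \<le> t"
  unfolding strong_dist_def by (rule cInf_lower) (auto intro: bdd_belowI[of _ 0])

lemma strong_dist_nonneg: "0 \<le> strong_dist \<nu> x y"
  unfolding strong_dist_def by (rule cInf_greatest) (use strong_dist_set_nonempty in auto)

lemma strong_dist_less_imp: "strong_dist \<nu> x y < t \<Longrightarrow> 1 - t < \<nu> (x - y) t"
proof -
  assume "strong_dist \<nu> x y < t"
  then obtain s where "0 < s" "1 - s < \<nu> (x - y) s" "s < t"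
    using cInf_lessD[of "{t. 0 < t \<and> 1 - t < \<nu> (x - y) t}" t] strong_dist_set_nonempty
    unfolding strong_dist_def by auto
  then show ?thesis using pn_mono[of s t "x - y"] by linarith
qed

lemma strong_dist_commute: "strong_dist \<nu> x y = strong_dist \<nu> y x"
  using pn_minus[of "y - x"] unfolding strong_dist_def by simp

lemma strong_dist_self: "strong_dist \<nu> x x = 0"
proof -
  have "strong_dist \<nu> x x \<le> t" if "t > 0" for t
    using that pn_eq_H0_iff[of 0] by (intro strong_dist_le) (auto simp: H0_def)
  then have "strong_dist \<nu> x x \<le> 0" by (rule field_le_epsilon) simp
  with strong_dist_nonneg[of x x] show ?thesis by linarith
qed

lemma strong_dist_eq_0_imp: "strong_dist \<nu> x y = 0 \<Longrightarrow> x = y"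
proof -
  assume d0: "strong_dist \<nu> x y = 0"
  have "\<nu> (x - y) t = H0 t" for t
  proof (cases "t \<le> 0")
    case True
    then show ?thesis by (simp add: pn_nonpos_eq_0 H0_def)
  next
    case False
    have near_1: "1 - e \<le> \<nu> (x - y) t" if "0 < e" for e
    proof -
      have "1 - min e (t/2) < \<nu> (x - y) (min e (t/2))"
        using d0 False that by (intro strong_dist_less_imp) auto
      moreover have "\<nu> (x - y) (min e (t/2)) \<le> \<nu> (x - y) t"
        using False by (intro pn_mono) auto
      ultimately show ?thesis by linarith
    qed
    have "1 \<le> \<nu> (x - y) t"
    proof (rule field_le_epsilon)
      fix e :: real
      assume "0 < e"
      show "1 \<le> \<nu> (x - y) t + e" using near_1[OF \<open>0 < e\<close>] by simp
    qed
    then show ?thesis using False pn_le_1[of "x - y" t] by (simp add: H0_def)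
  qed
  then show "x = y" using pn_eq_H0_iff[of "x - y"] by auto
qed

lemma strong_dist_triangle: "strong_dist \<nu> x z \<le> strong_dist \<nu> x y + strong_dist \<nu> y z"
proof (rule field_le_epsilon)
  fix e :: real
  assume "0 < e"
  define s t where "s = strong_dist \<nu> x y + e/2" and "t = strong_dist \<nu> y z + e/2"
  have st: "0 < s" "0 < t"
    using \<open>0 < e\<close> strong_dist_nonneg unfolding s_def t_def by (auto intro: add_nonneg_pos)
  have "1 - s < \<nu> (x - y) s" "1 - t < \<nu> (y - z) t"
    using \<open>0 < e\<close> by (auto intro: strong_dist_less_imp simp: s_def t_def)
  moreover have "min (\<nu> (x - y) s) (\<nu> (y - z) t) \<le> \<nu> (x - z) (s + t)"
    using pn_min_le_add[of "x - y" s "y - z" t] by simp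
  ultimately have "strong_dist \<nu> x z \<le> s + t"
    using st by (intro strong_dist_le) auto
  then show "strong_dist \<nu> x z \<le> strong_dist \<nu> x y + strong_dist \<nu> y z + e"
    unfolding s_def t_def by simp
qed

lemma Metric_space_strong_dist: "Metric_space UNIV (strong_dist \<nu>)"
  by unfold_locales
    (auto intro: strong_dist_nonneg strong_dist_commute strong_dist_triangle
      strong_dist_eq_0_imp simp: strong_dist_self)

lemma mcomplete_strong_dist:
  assumes "strongly_complete \<nu>"
  shows "Metric_space.mcomplete UNIV (strong_dist \<nu>)"
proof -
  interpret V: Metric_space UNIV "strong_dist \<nu>" by (rule Metric_space_strong_dist)
  show ?thesis unfolding V.mcomplete_def
  proof (intro allI impI)
    fix \<sigma>
    assume Cauchy: "V.MCauchy \<sigma>"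
    have "strong_cauchy \<nu> \<sigma>"
      unfolding strong_cauchy_def
    proof (intro allI impI)
      fix t :: real
      assume "0 < t"
      then obtain N where N: "\<And>n n'. N \<le> n \<Longrightarrow> N \<le> n' \<Longrightarrow> strong_dist \<nu> (\<sigma> n) (\<sigma> n') < t"
        using Cauchy unfolding V.MCauchy_def by blast
      show "\<exists>N. \<forall>m>N. \<forall>n>N. 1 - t < \<nu> (\<sigma> n - \<sigma> m) t"
        by (intro exI[of _ N]) (auto intro!: strong_dist_less_imp N)
    qed
    then obtain p where p: "strong_conv \<nu> \<sigma> p"
      using assms unfolding strongly_complete_def by blast
    have "\<forall>\<^sub>F n in sequentially. strong_dist \<nu> (\<sigma> n) p < e" if "0 < e" for e
    proof -
      obtain N where N: "\<forall>n\<ge>N. \<sigma> n \<in> strong_nbhd \<nu> p (e/2)"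
        using p \<open>0 < e\<close> unfolding strong_conv_def by (metis half_gt_zero)
      have "strong_dist \<nu> (\<sigma> n) p < e" if "n \<ge> N" for n
      proof -
        have "strong_dist \<nu> p (\<sigma> n) \<le> e/2"
          using N that \<open>0 < e\<close> by (intro strong_dist_le) (auto simp: strong_nbhd_def)
        with \<open>0 < e\<close> show ?thesis by (simp add: strong_dist_commute)
      qed
      then show ?thesis by (auto simp: eventually_sequentially)
    qed
    then show "\<exists>x. limitin V.mtopology \<sigma> x sequentially"
      by (auto simp: V.limitin_metric)
  qed
qed

subsection \<open>The norms \<open>\<parallel>\<cdot>\<parallel>\<^sub>w\<close>\<close>

lemma pn_norm_upper: "w < 1 \<Longrightarrow> \<nu> x a < w \<Longrightarrow> a \<le> pn_norm \<nu> w x"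
  unfolding pn_norm_def
proof (rule cSup_upper)
  assume "w < 1"
  then have "\<forall>\<^sub>F t in at_top. w < \<nu> x t"
    by (rule order_tendstoD(1)[OF pn_tendsto_1])
  then obtain N where "\<forall>t\<ge>N. w < \<nu> x t"
    by (auto simp: eventually_at_top_linorder)
  then show "bdd_above {t. \<nu> x t < w}"
    by (intro bdd_aboveI[of _ N]) (meson linorder_not_le mem_Collect_eq order.asym)
qed simp

lemma pn_norm_least: "0 < w \<Longrightarrow> (\<And>t. \<nu> x t < w \<Longrightarrow> t \<le> b) \<Longrightarrow> pn_norm \<nu> w x \<le> b"
  unfolding pn_norm_def
proof (rule cSup_least)
  assume "0 < w"
  then have "0 \<in> {t. \<nu> x t < w}"
    by (simp add: pn_nonpos_eq_0)
  then show "{t. \<nu> x t < w} \<noteq> {}" by blast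
qed auto

lemma pn_norm_nonneg: "0 < w \<Longrightarrow> w < 1 \<Longrightarrow> 0 \<le> pn_norm \<nu> w x"
  by (rule pn_norm_upper) (simp_all add: pn_nonpos_eq_0)

lemma pn_norm_less_imp: "w < 1 \<Longrightarrow> pn_norm \<nu> w x < a \<Longrightarrow> w \<le> \<nu> x a"
proof (rule ccontr)
  assume "w < 1" "pn_norm \<nu> w x < a" "\<not> w \<le> \<nu> x a"
  then have "a \<le> pn_norm \<nu> w x" by (intro pn_norm_upper) auto
  with \<open>pn_norm \<nu> w x < a\<close> show False by simp
qed

lemma pn_norm_minus: "pn_norm \<nu> w (- x) = pn_norm \<nu> w x"
  unfolding pn_norm_def by (simp add: pn_minus)

lemma pn_norm_triangle:
  assumes "0 < w" "w < 1"
  shows "pn_norm \<nu> w (p + q) \<le> pn_norm \<nu> w p + pn_norm \<nu> w q"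
proof (rule field_le_epsilon)
  fix e :: real
  assume "0 < e"
  define a b where "a = pn_norm \<nu> w p + e/2" and "b = pn_norm \<nu> w q + e/2"
  have "w \<le> \<nu> p a" "w \<le> \<nu> q b"
    using pn_norm_less_imp[OF assms(2), of p a] pn_norm_less_imp[OF assms(2), of q b] \<open>0 < e\<close>
    unfolding a_def b_def by simp_all
  then have "w \<le> \<nu> (p + q) (a + b)"
    using pn_min_le_add[of p a q b] by linarith
  then have "pn_norm \<nu> w (p + q) \<le> a + b"
  proof (intro pn_norm_least[OF assms(1)])
    fix t
    assume "\<nu> (p + q) t < w"
    with \<open>w \<le> \<nu> (p + q) (a + b)\<close> show "t \<le> a + b"
      using pn_mono[of "a + b" t "p + q"] by (cases "a + b \<le> t") auto
  qed
  then show "pn_norm \<nu> w (p + q) \<le> pn_norm \<nu> w p + pn_norm \<nu> w q + e"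
    unfolding a_def b_def by simp
qed

lemma pn_norm_scaleR_le:
  assumes "0 < w" "w < 1" "0 < c"
  shows "pn_norm \<nu> w (c *\<^sub>R x) \<le> c * pn_norm \<nu> w x"
proof (rule pn_norm_least[OF assms(1)])
  fix t assume t: "\<nu> (c *\<^sub>R x) t < w"
  show "t \<le> c * pn_norm \<nu> w x"
  proof (cases "t \<le> 0")
    case True
    have "0 \<le> c * pn_norm \<nu> w x"
      using pn_norm_nonneg[OF assms(1,2), of x] assms(3) by simp
    with True show ?thesis by linarith
  next
    case False
    have "t / c \<le> pn_norm \<nu> w x"
      using t assms pn_scaleR[of c x t] by (intro pn_norm_upper) auto
    then show ?thesis using assms(3) by (simp add: divide_le_eq mult.commute)
  qed
qed

lemma pn_norm_diff_le_strong_dist: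
  assumes "0 < w" "strong_dist \<nu> x y < t" "t \<le> 1 - w"
  shows "pn_norm \<nu> w (x - y) \<le> t"
proof (rule pn_norm_least[OF assms(1)])
  fix s assume "\<nu> (x - y) s < w"
  moreover have "w < \<nu> (x - y) t"
    using strong_dist_less_imp[OF assms(2)] assms(3) by linarith
  ultimately show "s \<le> t"
    using pn_mono[of t s "x - y"] by force
qed

lemma strong_dist_add_le:
  assumes "0 < s" "s < 1" "pn_norm \<nu> (1 - s/2) y < s"
  shows "strong_dist \<nu> p (p + y) \<le> s"
proof (rule strong_dist_le[OF assms(1)])
  have "1 - s/2 \<le> \<nu> y s"
    using assms by (intro pn_norm_less_imp) auto
  then show "1 - s < \<nu> (p - (p + y)) s"
    using assms(1) pn_minus[of y] by simp
qed

lemma continuous_map_pn_norm: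
  assumes "0 < w" "w < 1"
  shows "continuous_map (strong_mtopology \<nu>) euclidean (pn_norm \<nu> w)"
proof -
  interpret V: Metric_space UNIV "strong_dist \<nu>" by (rule Metric_space_strong_dist)
  have close: "\<bar>pn_norm \<nu> w x - pn_norm \<nu> w y\<bar> < e"
    if "strong_dist \<nu> x y < min (e/2) (1 - w)" "0 < e" for x y e
  proof -
    have "strong_dist \<nu> y x < min (e/2) (1 - w)"
      using that(1) strong_dist_commute[of x y] by simp
    then have "pn_norm \<nu> w (x - y) \<le> e/2" "pn_norm \<nu> w (y - x) \<le> e/2"
      using pn_norm_diff_le_strong_dist[OF assms(1) that(1)]
        pn_norm_diff_le_strong_dist[OF assms(1)] by fastforce+
    moreover have "pn_norm \<nu> w x \<le> pn_norm \<nu> w (x - y) + pn_norm \<nu> w y"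
      "pn_norm \<nu> w y \<le> pn_norm \<nu> w (y - x) + pn_norm \<nu> w x"
      using pn_norm_triangle[OF assms, of "x - y" y] pn_norm_triangle[OF assms, of "y - x" x]
      by simp_all
    ultimately show ?thesis using \<open>0 < e\<close> by linarith
  qed
  show ?thesis
    unfolding mtopology_is_euclidean[symmetric] V.metric_continuous_map[OF Met_TC.Metric_space_axioms]
  proof (intro conjI ballI allI impI)
    fix a and e :: real
    assume "0 < e"
    then show "\<exists>\<delta>>0. \<forall>x. x \<in> UNIV \<and> strong_dist \<nu> a x < \<delta> \<longrightarrow> dist (pn_norm \<nu> w a) (pn_norm \<nu> w x) < e"
      using assms close by (intro exI[of _ "min (e/2) (1 - w)"]) (auto simp: dist_real_def)
  qed simp
qed

end

lemma continuous_map_bounded_ops: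
  assumes "pn_space \<nu>" "pn_space \<mu>" "T \<in> bounded_ops \<nu> \<mu>"
  shows "continuous_map (strong_mtopology \<nu>) (strong_mtopology \<mu>) T"
proof -
  interpret V: Metric_space UNIV "strong_dist \<nu>" by (rule Metric_space_strong_dist[OF assms(1)])
  have "\<exists>\<delta>>0. \<forall>y. strong_dist \<nu> x y < \<delta> \<longrightarrow> strong_dist \<mu> (T x) (T y) < e"
    if "e > 0" for x e
  proof -
    \<comment> \<open>\<open>d\<close>-balls are strongly open, and strong neighbourhoods lie in \<open>d\<close>-balls.\<close>
    define U where "U = {z. strong_dist \<mu> (T x) z < e}"
    have "strong_open \<mu> U"
      unfolding strong_open_def
    proof
      fix q
      assume "q \<in> U"
      define t where "t = (e - strong_dist \<mu> (T x) q) / 2"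
      have "strong_nbhd \<mu> q t \<subseteq> U"
      proof
        fix z
        assume "z \<in> strong_nbhd \<mu> q t"
        then have "strong_dist \<mu> q z \<le> t"
          using \<open>q \<in> U\<close> by (intro strong_dist_le[OF assms(2)]) (auto simp: strong_nbhd_def U_def t_def)
        then show "z \<in> U"
          using \<open>q \<in> U\<close> strong_dist_triangle[OF assms(2), of "T x" z q]
          unfolding U_def t_def by simp
      qed
      moreover have "t > 0"
        using \<open>q \<in> U\<close> by (simp add: U_def t_def)
      ultimately show "\<exists>t>0. strong_nbhd \<mu> q t \<subseteq> U" by blast
    qed
    then have "strong_open \<nu> (T -` U)"
      using assms(3) unfolding bounded_ops_def by blast
    moreover have "x \<in> T -` U"
      using \<open>e > 0\<close> strong_dist_self[OF assms(2)] by (simp add: U_def)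
    ultimately obtain t where t: "t > 0" "strong_nbhd \<nu> x t \<subseteq> T -` U"
      unfolding strong_open_def by blast
    have "strong_dist \<mu> (T x) (T y) < e" if "strong_dist \<nu> x y < t" for y
      using subsetD[OF t(2), of y] strong_dist_less_imp[OF assms(1) that]
      by (simp add: strong_nbhd_def U_def)
    with t(1) show ?thesis by blast
  qed
  then show ?thesis
    by (simp add: V.metric_continuous_map[OF Metric_space_strong_dist[OF assms(2)]])
qed

lemma closedin_uniform_level_set:
  assumes "pn_space \<nu>" "pn_space \<mu>" "\<And>n. T n \<in> bounded_ops \<nu> \<mu>" "0 < w" "w < 1"
  shows "closedin (strong_mtopology \<nu>) {x. \<forall>n. pn_norm \<mu> w (T n x) \<le> c}"
proof -
  interpret V: Metric_space UNIV "strong_dist \<nu>" by (rule Metric_space_strong_dist[OF assms(1)])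
  have "continuous_map (strong_mtopology \<nu>) euclidean (pn_norm \<mu> w \<circ> T n)" for n
    using continuous_map_bounded_ops[OF assms(1,2,3)] continuous_map_pn_norm[OF assms(2,4,5)]
    by (rule continuous_map_compose)
  then have "closedin (strong_mtopology \<nu>) {x. pn_norm \<mu> w (T n x) \<in> {..c}}" for n
    using closedin_continuous_map_preimage[of _ euclidean _ "{..c}"] by fastforce
  then have "closedin (strong_mtopology \<nu>) (\<Inter>n. {x. pn_norm \<mu> w (T n x) \<in> {..c}})"
    by (intro closedin_Inter) auto
  then show ?thesis
    by (simp add: Collect_all_eq)
qed

lemma uniform_level_set_contains_ball:
  assumes "pn_space \<nu>" "strongly_complete \<nu>" "pn_space \<mu>" "\<And>n. T n \<in> bounded_ops \<nu> \<mu>"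
    and "0 < w" "w < 1" "\<And>x. bdd_above (range (\<lambda>n. pn_norm \<mu> w (T n x)))"
  obtains k :: nat and p r where "0 < r"
    "\<And>y n. strong_dist \<nu> p y < r \<Longrightarrow> pn_norm \<mu> w (T n y) \<le> real k"
proof -
  interpret V: Metric_space UNIV "strong_dist \<nu>" by (rule Metric_space_strong_dist[OF assms(1)])
  define F where "F k = {x. \<forall>n. pn_norm \<mu> w (T n x) \<le> real k}" for k :: nat
  have "(\<Union>k. F k) = UNIV"
  proof (rule sym, rule UNIV_eq_I)
    fix x
    obtain B where "\<And>n. pn_norm \<mu> w (T n x) \<le> B"
      using assms(7)[of x] unfolding bdd_above_def by blast
    then have "x \<in> F (nat \<lceil>B\<rceil>)"
      unfolding F_def using real_nat_ceiling_ge[of B] order_trans by blast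
    then show "x \<in> (\<Union>k. F k)" by blast
  qed
  then have "V.mtopology interior_of (\<Union>k. F k) \<noteq> {}"
    using interior_of_topspace[of V.mtopology] by simp
  moreover have "closedin V.mtopology (F k)" for k
    unfolding F_def by (rule closedin_uniform_level_set[OF assms(1,3,4,5,6)])
  moreover have "countable (range F)"
    by (rule countable_image) simp
  ultimately obtain k where "V.mtopology interior_of F k \<noteq> {}"
    using V.metric_Baire_category_alt[OF mcomplete_strong_dist[OF assms(1,2)], of "range F"] by blast
  then obtain p where p: "p \<in> V.mtopology interior_of F k"
    by blast
  obtain r where "0 < r" "V.mball p r \<subseteq> V.mtopology interior_of F k"
    using p openin_interior_of[of V.mtopology "F k"] unfolding V.openin_mtopology by blast
  then have "V.mball p r \<subseteq> F k"
    using interior_of_subset[of V.mtopology "F k"] by blast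
  with \<open>0 < r\<close> show thesis
    by (intro that[of r p k]) (auto simp: F_def)
qed

lemma pn_norm_bound_from_ball:
  assumes "pn_space \<nu>" "pn_space \<mu>" "linear S" "0 < w'" "w' < 1" "0 < s" "s < 1"
    and ball: "\<And>y. strong_dist \<nu> p y \<le> s \<Longrightarrow> pn_norm \<mu> w' (S y) \<le> c"
    and x: "pn_norm \<nu> (1 - s/2) x \<le> 1"
  shows "pn_norm \<mu> w' (S x) \<le> 4 * c / s"
proof -
  define y where "y = (s/2) *\<^sub>R x"
  have "pn_norm \<nu> (1 - s/2) y \<le> s/2 * pn_norm \<nu> (1 - s/2) x"
    unfolding y_def using assms(6,7) by (intro pn_norm_scaleR_le[OF assms(1)]) auto
  also have "\<dots> < s"
    using x assms(6) by (simp add: mult_le_cancel_left1 order.strict_trans1)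
  finally have "strong_dist \<nu> p (p + y) \<le> s"
    by (rule strong_dist_add_le[OF assms(1,6,7)])
  then have "pn_norm \<mu> w' (S (p + y)) \<le> c" "pn_norm \<mu> w' (S p) \<le> c"
    using ball strong_dist_self[OF assms(1), of p] assms(6) by auto
  moreover have "S y = S (p + y) + - S p"
    using linear_add[OF assms(3)] by simp
  ultimately have Sy: "pn_norm \<mu> w' (S y) \<le> 2 * c"
    using pn_norm_triangle[OF assms(2,4,5), of "S (p + y)" "- S p"]
      pn_norm_minus[OF assms(2)] by simp
  have "S x = (2/s) *\<^sub>R S y"
    using linear_scale[OF assms(3)] assms(6) by (simp add: y_def)
  then have "pn_norm \<mu> w' (S x) \<le> 2/s * pn_norm \<mu> w' (S y)"
    using pn_norm_scaleR_le[OF assms(2,4,5), of "2/s" "S y"] assms(6) by simp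
  also have "\<dots> \<le> 2/s * (2 * c)"
    using Sy assms(6) by (intro mult_left_mono) auto
  finally show ?thesis by simp
qed

theorem theorem4p11:
  fixes \<nu> :: "'a::real_vector \<Rightarrow> real \<Rightarrow> real"
    and \<mu> :: "'b::real_vector \<Rightarrow> real \<Rightarrow> real"
    and T :: "nat \<Rightarrow> 'a \<Rightarrow> 'b"
  assumes "pn_space \<nu>" and "strongly_complete \<nu>"
    and "pn_space \<mu>"
    and "\<And>n. T n \<in> bounded_ops \<nu> \<mu>"
    and "\<And>x w'. 0 < w' \<Longrightarrow> w' < 1 \<Longrightarrow> bdd_above (range (\<lambda>n. pn_norm \<mu> w' (T n x)))"
  shows "\<forall>w'. 0 < w' \<and> w' < 1 \<longrightarrow>
           (\<exists>w. 0 < w \<and> w < 1 \<and> (SUP n. op_norm \<nu> \<mu> w w' (T n)) < \<infinity>)"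
proof (intro allI impI)
  fix w' :: real
  assume "0 < w' \<and> w' < 1"
  then have w': "0 < w'" "w' < 1" by auto
  obtain k :: nat and p r where "0 < r"
    and ball: "\<And>y n. strong_dist \<nu> p y < r \<Longrightarrow> pn_norm \<mu> w' (T n y) \<le> real k"
    by (rule uniform_level_set_contains_ball[OF assms(1-4) w' assms(5)[OF w']], rule that)
  define s where "s = min r 1 / 2"
  have s: "0 < s" "s < 1" "s < r"
    using \<open>0 < r\<close> by (auto simp: s_def)
  have "pn_norm \<mu> w' (T n x) \<le> 4 * real k / s" if "pn_norm \<nu> (1 - s/2) x \<le> 1" for n x
  proof (rule pn_norm_bound_from_ball[OF assms(1,3) _ w' s(1,2) _ that])
    show "linear (T n)"
      using assms(4) unfolding bounded_ops_def by blast
    show "pn_norm \<mu> w' (T n y) \<le> real k" if "strong_dist \<nu> p y \<le> s" for y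
      using that s(3) by (intro ball) linarith
  qed
  then have "(SUP n. op_norm \<nu> \<mu> (1 - s/2) w' (T n)) \<le> ereal (4 * real k / s)"
    unfolding op_norm_def by (intro SUP_least) auto
  also have "\<dots> < \<infinity>"
    by simp
  finally have "(SUP n. op_norm \<nu> \<mu> (1 - s/2) w' (T n)) < \<infinity>" .
  moreover have "0 < 1 - s/2" "1 - s/2 < 1"
    using s by simp_all
  ultimately show "\<exists>w. 0 < w \<and> w < 1 \<and> (SUP n. op_norm \<nu> \<mu> w w' (T n)) < \<infinity>"
    by blast
qed

end
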